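(* Let $(\mathbb{X},\mathcal{X},\mu,T)$ be a probability space with $T$ an invertible, measure-preserving, ergodic transformation, let $f:\mathbb{X}\to\mathbb{R}$ be measurable and let $q$ be a fixed integer. Then $$\mu\Big(\bigcup_{N>0}\bigcap_{n>N}\{f\circ T^{-n}<f\circ T^{n+q}\}\Big)=0,$$ i.e. the set of points $x$ for which $f(T^{-n}x)<f(T^{n+q}x)$ holds for all sufficiently large $n$ is $\mu$-negligible. (In particular, for $q=0$: $\mu\big(\bigcup_{N>0}\bigcap_{n>N}\{f\circ T^{-n}<f\circ T^{n}\}\big)=0$.) *)

theory Defs
  imports "HOL-Probability.Probability"
begin

definition measure_preserving_map :: "'a measure \<Rightarrow> ('a \<Rightarrow> 'a) \<Rightarrow> bool" where
  "measure_preserving_map M T \<longleftrightarrow> T \<in> measurable M M \<and> distr M M T = M"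

definition invertible_mpt :: "'a measure \<Rightarrow> ('a \<Rightarrow> 'a) \<Rightarrow> bool" where
  "invertible_mpt M T \<longleftrightarrow> measure_preserving_map M T \<and> bij_betw T (space M) (space M)
     \<and> measure_preserving_map M (inv_into (space M) T)"

definition ergodic_map :: "'a measure \<Rightarrow> ('a \<Rightarrow> 'a) \<Rightarrow> bool" where
  "ergodic_map M T \<longleftrightarrow> (\<forall>A\<in>sets M. T -` A \<inter> space M = A \<longrightarrow>
      emeasure M A = 0 \<or> emeasure M A = 1)"

definition ipow :: "'a measure \<Rightarrow> ('a \<Rightarrow> 'a) \<Rightarrow> int \<Rightarrow> 'a \<Rightarrow> 'a" where
  "ipow M T k = (if 0 \<le> k then T ^^ nat k else (inv_into (space M) T) ^^ nat (- k))"

end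

theory Submission
  imports Defs
begin

text \<open>Suppose the set \<open>A\<close> of points with \<open>f (T^(-n) x) < f (T^(n+q) x)\<close> for all \<open>n > N\<close> has
  measure \<open>c > 0\<close>, and choose a level \<open>s\<close> with \<open>\<mu>{f < s} \<le> c/4 \<le> \<mu>{f \<le> s}\<close>. By the ergodic
  theorem almost every orbit visits \<open>A\<close> with frequency \<open>c\<close>, visits \<open>{f < s}\<close> with frequency at
  most \<open>c/4\<close> both forwards and backwards, and returns to \<open>{f \<le> s}\<close> infinitely often. At such a
  return time \<open>i\<close>, each visit \<open>T^k x \<in> A\<close> with \<open>k < i - N - |q|\<close> forces \<open>f (T^(2k+q-i) x) < s\<close>,
  and these times are distinct and lie in \<open>[-i-|q|, i+|q|]\<close>. Counting gives roughly
  \<open>c i \<le> 2 (c/4) i\<close>, which fails for large \<open>i\<close>. The two halves of Birkhoff's theorem for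
  indicators used here are derived from the maximal ergodic inequality.\<close>

subsection \<open>Integer powers of an invertible transformation\<close>

lemma invertible_mpt_bij_betw:
  "invertible_mpt M T \<Longrightarrow> bij_betw T (space M) (space M)"
  unfolding invertible_mpt_def by blast

lemma invertible_mpt_measurable:
  assumes "invertible_mpt M T"
  shows "T \<in> measurable M M" "inv_into (space M) T \<in> measurable M M"
  using assms unfolding invertible_mpt_def measure_preserving_map_def by auto

lemma ipow_of_nat: "ipow M T (int k) = T ^^ k"
  unfolding ipow_def by simp

lemma ipow_measurable:
  assumes "invertible_mpt M T"
  shows "ipow M T a \<in> measurable M M"
  using invertible_mpt_measurable[OF assms] unfolding ipow_def by auto

lemma ipow_in_space:
  "invertible_mpt M T \<Longrightarrow> x \<in> space M \<Longrightarrow> ipow M T a x \<in> space M"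
  using measurable_space[OF ipow_measurable] .

lemma ipow_plus_1:
  assumes T: "invertible_mpt M T" and x: "x \<in> space M"
  shows "ipow M T (a + 1) x = T (ipow M T a x)"
proof (cases "0 \<le> a")
  case True
  then have "nat (a + 1) = Suc (nat a)" by auto
  with True show ?thesis unfolding ipow_def by simp
next
  case False
  define m where "m = nat (- a - 1)"
  have m: "nat (- a) = Suc m" "nat (- (a + 1)) = m" using False unfolding m_def by auto
  have "(inv_into (space M) T ^^ m) x \<in> space M"
    using x measurable_space[OF measurable_compose_n[OF invertible_mpt_measurable(2)[OF T]]] by blast
  then have "T ((inv_into (space M) T ^^ Suc m) x) = (inv_into (space M) T ^^ m) x"
    by (simp add: bij_betw_inv_into_right[OF invertible_mpt_bij_betw[OF T]])
  with False m show ?thesis unfolding ipow_def by (cases "a = -1") auto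
qed

lemma ipow_minus_1:
  assumes T: "invertible_mpt M T" and x: "x \<in> space M"
  shows "ipow M T (a - 1) x = inv_into (space M) T (ipow M T a x)"
  using ipow_plus_1[OF T x, of "a - 1"] ipow_in_space[OF T x, of "a - 1"]
    bij_betw_inv_into_left[OF invertible_mpt_bij_betw[OF T]] by simp

lemma ipow_add:
  assumes T: "invertible_mpt M T" and x: "x \<in> space M"
  shows "ipow M T (a + b) x = ipow M T a (ipow M T b x)"
proof (induction a rule: int_induct[where k = 0])
  case base
  then show ?case by (simp add: ipow_def)
next
  case (step1 i)
  have "ipow M T (i + 1 + b) x = T (ipow M T (i + b) x)"
    using ipow_plus_1[OF T x, of "i + b"] by (simp add: ac_simps)
  with step1 show ?case using ipow_plus_1[OF T ipow_in_space[OF T x]] by simp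
next
  case (step2 i)
  have "ipow M T (i - 1 + b) x = inv_into (space M) T (ipow M T (i + b) x)"
    using ipow_minus_1[OF T x, of "i + b"] by (simp add: algebra_simps)
  with step2 show ?case using ipow_minus_1[OF T ipow_in_space[OF T x]] by simp
qed

lemma ergodic_map_inv_into:
  assumes T: "invertible_mpt M T" and erg: "ergodic_map M T"
  shows "ergodic_map M (inv_into (space M) T)"
  unfolding ergodic_map_def
proof (intro ballI impI)
  fix A assume A: "A \<in> sets M" and inv: "inv_into (space M) T -` A \<inter> space M = A"
  have bij: "bij_betw T (space M) (space M)" by (rule invertible_mpt_bij_betw[OF T])
  have "T x \<in> A \<longleftrightarrow> x \<in> A" if x: "x \<in> space M" for x
  proof -
    have "inv_into (space M) T (T x) \<in> A \<longleftrightarrow> T x \<in> A"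
      using inv bij_betw_apply[OF bij x] by blast
    then show ?thesis using bij_betw_inv_into_left[OF bij x] by simp
  qed
  then have "T -` A \<inter> space M = A" using inv by blast
  with erg A show "emeasure M A = 0 \<or> emeasure M A = 1" unfolding ergodic_map_def by blast
qed

subsection \<open>The maximal ergodic inequality\<close>

definition birkhoff_sum :: "('a \<Rightarrow> 'a) \<Rightarrow> ('a \<Rightarrow> real) \<Rightarrow> nat \<Rightarrow> 'a \<Rightarrow> real" where
  "birkhoff_sum S h n x = (\<Sum>i<n. h ((S ^^ i) x))"

definition max_birkhoff_sum :: "('a \<Rightarrow> 'a) \<Rightarrow> ('a \<Rightarrow> real) \<Rightarrow> nat \<Rightarrow> 'a \<Rightarrow> real" where
  "max_birkhoff_sum S h n x = Max ((\<lambda>k. birkhoff_sum S h k x) ` {..n})"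

lemma birkhoff_sum_0 [simp]: "birkhoff_sum S h 0 x = 0"
  by (simp add: birkhoff_sum_def)

lemma birkhoff_sum_Suc: "birkhoff_sum S h (Suc n) x = h x + birkhoff_sum S h n (S x)"
  unfolding birkhoff_sum_def sum.lessThan_Suc_shift by (simp add: funpow_Suc_right del: funpow.simps)

lemma birkhoff_sum_measurable:
  assumes [measurable]: "S \<in> measurable M M" "h \<in> borel_measurable M"
  shows "birkhoff_sum S h n \<in> borel_measurable M"
  unfolding birkhoff_sum_def[abs_def] by measurable

lemma max_birkhoff_sum_measurable:
  assumes "S \<in> measurable M M" "h \<in> borel_measurable M"
  shows "max_birkhoff_sum S h n \<in> borel_measurable M"
  unfolding max_birkhoff_sum_def[abs_def]
  using birkhoff_sum_measurable[OF assms] by measurable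

lemma birkhoff_sum_le_max: "k \<le> n \<Longrightarrow> birkhoff_sum S h k x \<le> max_birkhoff_sum S h n x"
  unfolding max_birkhoff_sum_def by (intro Max_ge) auto

lemma max_birkhoff_sum_mono: "n \<le> m \<Longrightarrow> max_birkhoff_sum S h n x \<le> max_birkhoff_sum S h m x"
  unfolding max_birkhoff_sum_def by (intro Max_mono) auto

lemma max_birkhoff_sum_nonneg: "0 \<le> max_birkhoff_sum S h n x"
  using birkhoff_sum_le_max[of 0 n] by simp

lemma abs_birkhoff_sum_le:
  assumes "\<And>k. \<bar>h ((S ^^ k) x)\<bar> \<le> C"
  shows "\<bar>birkhoff_sum S h n x\<bar> \<le> n * C"
proof -
  have "\<bar>birkhoff_sum S h n x\<bar> \<le> (\<Sum>i<n. \<bar>h ((S ^^ i) x)\<bar>)"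
    unfolding birkhoff_sum_def by (rule sum_abs)
  also have "\<dots> \<le> n * C" using sum_mono[of "{..<n}", OF assms] by simp
  finally show ?thesis .
qed

lemma abs_max_birkhoff_sum_le:
  assumes "\<And>k. \<bar>h ((S ^^ k) x)\<bar> \<le> C"
  shows "\<bar>max_birkhoff_sum S h n x\<bar> \<le> n * C"
proof -
  have C: "0 \<le> C" using assms[of 0] by linarith
  have "birkhoff_sum S h k x \<le> n * C" if "k \<le> n" for k
    using abs_birkhoff_sum_le[of h S x C k, OF assms] mult_right_mono[of "real k" "real n" C] that C
    by linarith
  then have "max_birkhoff_sum S h n x \<le> n * C"
    unfolding max_birkhoff_sum_def by (subst Max_le_iff) auto
  moreover have "0 \<le> n * C" using C by simp
  ultimately show ?thesis using max_birkhoff_sum_nonneg[of S h n x] by linarith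
qed

lemma max_birkhoff_sum_diff_le:
  "max_birkhoff_sum S h n x - max_birkhoff_sum S h n (S x)
     \<le> (if 0 < max_birkhoff_sum S h n x then h x else 0)"
proof (cases "0 < max_birkhoff_sum S h n x")
  case True
  have "max_birkhoff_sum S h n x \<in> (\<lambda>k. birkhoff_sum S h k x) ` {..n}"
    unfolding max_birkhoff_sum_def by (intro Max_in) auto
  then obtain k where k: "k \<le> n" "max_birkhoff_sum S h n x = birkhoff_sum S h k x"
    by auto
  with True obtain k' where "k = Suc k'" by (cases k) auto
  with k have "max_birkhoff_sum S h n x = h x + birkhoff_sum S h k' (S x)"
    and "birkhoff_sum S h k' (S x) \<le> max_birkhoff_sum S h n (S x)"
    by (auto simp: birkhoff_sum_Suc intro: birkhoff_sum_le_max)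
  with True show ?thesis by simp
next
  case False
  then show ?thesis using max_birkhoff_sum_nonneg[of S h n "S x"] by simp
qed

lemma maximal_ergodic_inequality:
  assumes "finite_measure M" and S: "measure_preserving_map M S"
    and h [measurable]: "h \<in> borel_measurable M" and bound: "\<And>x. x \<in> space M \<Longrightarrow> \<bar>h x\<bar> \<le> C"
  shows "0 \<le> (\<integral>x. (if 0 < max_birkhoff_sum S h n x then h x else 0) \<partial>M)"
proof -
  interpret finite_measure M by fact
  have S_meas [measurable]: "S \<in> measurable M M" and distr: "distr M M S = M"
    using S unfolding measure_preserving_map_def by auto
  define F where "F = max_birkhoff_sum S h n"
  have [measurable]: "F \<in> borel_measurable M"
    unfolding F_def by (rule max_birkhoff_sum_measurable) measurable
  have bound_F: "\<bar>F x\<bar> \<le> n * C" if "x \<in> space M" for x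
    unfolding F_def using that
    by (intro abs_max_birkhoff_sum_le bound) (simp add: measurable_space[OF measurable_compose_n])
  have int_F: "integrable M F"
    using bound_F by (intro integrable_const_bound[where B = "n * C"]) auto
  have int_FS: "integrable M (\<lambda>x. F (S x))"
    using bound_F measurable_space[OF S_meas] by (intro integrable_const_bound[where B = "n * C"]) auto
  have "\<bar>if 0 < F x then h x else 0\<bar> \<le> C" if "x \<in> space M" for x
    using bound[OF that] by auto
  then have int_h: "integrable M (\<lambda>x. if 0 < F x then h x else 0)"
    by (intro integrable_const_bound[where B = C]) auto
  have "(\<integral>x. F (S x) \<partial>M) = (\<integral>x. F x \<partial>M)"
    using integral_distr[of S M M F] distr by simp
  then have "0 = (\<integral>x. F x - F (S x) \<partial>M)"
    using int_F int_FS by simp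
  also have "\<dots> \<le> (\<integral>x. (if 0 < F x then h x else 0) \<partial>M)"
    using int_F int_FS int_h by (intro integral_mono) (simp_all add: F_def max_birkhoff_sum_diff_le)
  finally show ?thesis unfolding F_def .
qed

subsection \<open>Ergodic visit frequencies\<close>

lemma birkhoff_sum_indicator:
  "birkhoff_sum S (indicator B) n x = real (card {k. k < n \<and> (S ^^ k) x \<in> B})"
  unfolding birkhoff_sum_def
  using sum_indicator_eq_card[of "{..<n}" "{k. (S ^^ k) x \<in> B}"]
  by (simp add: indicator_def Int_def conj_commute)

lemma birkhoff_sum_diff_const:
  "birkhoff_sum S (\<lambda>x. h x - c) n x = birkhoff_sum S h n x - c * n"
  unfolding birkhoff_sum_def by (simp add: sum_subtractf)

lemma bdd_above_birkhoff_sum_iff: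
  "bdd_above (range (\<lambda>n. birkhoff_sum S h n (S x))) \<longleftrightarrow> bdd_above (range (\<lambda>n. birkhoff_sum S h n x))"
proof
  assume "bdd_above (range (\<lambda>n. birkhoff_sum S h n (S x)))"
  then obtain C where C: "\<And>n. birkhoff_sum S h n (S x) \<le> C" by (auto simp: bdd_above_def)
  have "birkhoff_sum S h n x \<le> max 0 (h x + C)" for n
    using C by (cases n) (auto simp: birkhoff_sum_Suc max.coboundedI2)
  then show "bdd_above (range (\<lambda>n. birkhoff_sum S h n x))" by (intro bdd_aboveI2)
next
  assume "bdd_above (range (\<lambda>n. birkhoff_sum S h n x))"
  then obtain C where C: "\<And>n. birkhoff_sum S h n x \<le> C" by (auto simp: bdd_above_def)
  have "birkhoff_sum S h n (S x) \<le> C - h x" for n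
    using C[of "Suc n"] by (simp add: birkhoff_sum_Suc)
  then show "bdd_above (range (\<lambda>n. birkhoff_sum S h n (S x)))" by (intro bdd_aboveI2)
qed

lemma bdd_above_range_iff_nat: "bdd_above (range f) \<longleftrightarrow> (\<exists>C::nat. \<forall>n. f n \<le> real C)"
proof
  assume "bdd_above (range f)"
  then obtain C where "\<And>n. f n \<le> C" by (auto simp: bdd_above_def)
  then have "\<forall>n. f n \<le> real (nat \<lceil>C\<rceil>)" using order_trans[OF _ real_nat_ceiling_ge] by blast
  then show "\<exists>C::nat. \<forall>n. f n \<le> real C" ..
next
  assume "\<exists>C::nat. \<forall>n. f n \<le> real C"
  then obtain C :: nat where "\<And>n. f n \<le> real C" by blast
  then show "bdd_above (range f)" by (intro bdd_aboveI2)
qed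

lemma measure_max_birkhoff_sum_pos_le:
  assumes "finite_measure M" and S: "measure_preserving_map M S" and B [measurable]: "B \<in> sets M"
  shows "c * measure M {x \<in> space M. 0 < max_birkhoff_sum S (\<lambda>x. indicator B x - c) n x} \<le> measure M B"
proof -
  interpret finite_measure M by fact
  have [measurable]: "S \<in> measurable M M" using S unfolding measure_preserving_map_def by simp
  define Q where "Q = {x \<in> space M. 0 < max_birkhoff_sum S (\<lambda>x. indicator B x - c) n x}"
  have Q [measurable]: "Q \<in> sets M"
    unfolding Q_def by (measurable, rule max_birkhoff_sum_measurable) measurable
  have "0 \<le> (\<integral>x. (if 0 < max_birkhoff_sum S (\<lambda>x. indicator B x - c) n x then indicator B x - c else 0) \<partial>M)"
    by (rule maximal_ergodic_inequality[OF assms(1) S, where C = "1 + \<bar>c\<bar>"]) (auto simp: indicator_def)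
  also have "\<dots> = (\<integral>x. indicator (Q \<inter> B) x - c * indicator Q x \<partial>M)"
    by (intro Bochner_Integration.integral_cong) (auto simp: Q_def indicator_def)
  also have "\<dots> = measure M (Q \<inter> B) - c * measure M Q"
    by (subst Bochner_Integration.integral_diff)
      (auto intro!: integrable_real_indicator simp: less_top[symmetric] emeasure_finite)
  finally have "c * measure M Q \<le> measure M (Q \<inter> B)" by simp
  also have "\<dots> \<le> measure M B" by (intro finite_measure_mono) auto
  finally show ?thesis unfolding Q_def .
qed

lemma measure_birkhoff_sum_unbounded_le:
  assumes "finite_measure M" and S: "measure_preserving_map M S" and B [measurable]: "B \<in> sets M"
    and c: "0 < c"
  shows "measure M {x \<in> space M. \<not> bdd_above (range (\<lambda>n. birkhoff_sum S (\<lambda>x. indicator B x - c) n x))}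
    \<le> measure M B / c"
proof -
  interpret finite_measure M by fact
  have [measurable]: "S \<in> measurable M M" using S unfolding measure_preserving_map_def by simp
  define Q where "Q n = {x \<in> space M. 0 < max_birkhoff_sum S (\<lambda>x. indicator B x - c) n x}" for n
  have [measurable]: "Q n \<in> sets M" for n
    unfolding Q_def by (measurable, rule max_birkhoff_sum_measurable) measurable
  have "incseq Q"
    unfolding incseq_def Q_def using max_birkhoff_sum_mono by (fastforce intro: less_le_trans)
  then have "(\<lambda>n. measure M (Q n)) \<longlonglongrightarrow> measure M (\<Union>n. Q n)"
    by (intro finite_Lim_measure_incseq) auto
  moreover have "measure M (Q n) \<le> measure M B / c" for n
    using measure_max_birkhoff_sum_pos_le[OF assms(1) S B, of c n] c
    by (simp add: Q_def pos_le_divide_eq mult.commute)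
  ultimately have bound: "measure M (\<Union>n. Q n) \<le> measure M B / c"
    by (intro LIMSEQ_le_const2) auto
  have cover: "{x \<in> space M. \<not> bdd_above (range (\<lambda>n. birkhoff_sum S (\<lambda>x. indicator B x - c) n x))}
      \<subseteq> (\<Union>n. Q n)"
  proof clarify
    fix x assume x: "x \<in> space M"
      and unbounded: "\<not> bdd_above (range (\<lambda>n. birkhoff_sum S (\<lambda>x. indicator B x - c) n x))"
    then have "\<not> (\<forall>n. birkhoff_sum S (\<lambda>x. indicator B x - c) n x \<le> 0)" by (auto intro: bdd_aboveI2)
    then obtain n where "0 < birkhoff_sum S (\<lambda>x. indicator B x - c) n x" by (auto simp: not_le)
    then have "0 < max_birkhoff_sum S (\<lambda>x. indicator B x - c) n x"
      using birkhoff_sum_le_max[of n n S _ x] by (blast intro: less_le_trans)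
    with x show "x \<in> (\<Union>n. Q n)" unfolding Q_def by blast
  qed
  have "(\<Union>n. Q n) \<in> sets M" by measurable
  with cover bound show ?thesis using finite_measure_mono by (meson order_trans)
qed

lemma eventually_visit_count_le:
  assumes "bdd_above (range (\<lambda>n. birkhoff_sum S (\<lambda>x. indicator B x - c) n x))" and "c < r"
  shows "\<forall>\<^sub>F K in sequentially. real (card {k. k < K \<and> (S ^^ k) x \<in> B}) \<le> r * real K"
proof -
  obtain C where C: "\<And>n. birkhoff_sum S (\<lambda>x. indicator B x - c) n x \<le> C"
    using assms(1) by (auto simp: bdd_above_def)
  have "real (card {k. k < K \<and> (S ^^ k) x \<in> B}) \<le> r * real K" if "C / (r - c) \<le> real K" for K
  proof -
    have "real (card {k. k < K \<and> (S ^^ k) x \<in> B}) \<le> c * real K + C"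
      using C[of K] by (simp add: birkhoff_sum_diff_const birkhoff_sum_indicator)
    moreover have "C \<le> r * real K - c * real K" using that assms(2) by (simp add: field_simps)
    ultimately show ?thesis by linarith
  qed
  moreover have "C / (r - c) \<le> real K" if "nat \<lceil>C / (r - c)\<rceil> \<le> K" for K
    using that real_nat_ceiling_ge[of "C / (r - c)"] of_nat_mono by (meson order_trans)
  ultimately show ?thesis unfolding eventually_sequentially by blast
qed

text \<open>The set where the Birkhoff sums of \<open>indicator B - c\<close> stay bounded above is invariant, and
  its complement has measure at most \<open>measure M B / c < 1\<close>; by ergodicity it is of full measure.\<close>
lemma ergodic_visits_upper_density:
  assumes "prob_space M" and S: "measure_preserving_map M S" and erg: "ergodic_map M S"
    and B [measurable]: "B \<in> sets M" and r: "measure M B < r"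
  shows "AE x in M. \<forall>\<^sub>F K in sequentially. real (card {k. k < K \<and> (S ^^ k) x \<in> B}) \<le> r * real K"
proof -
  interpret prob_space M by fact
  have S_meas [measurable]: "S \<in> measurable M M"
    using S unfolding measure_preserving_map_def by simp
  obtain c where c: "measure M B < c" "c < r" using dense[OF r] by blast
  then have c_pos: "0 < c" using measure_nonneg[of M B] by linarith
  define L where "L = {x \<in> space M. bdd_above (range (\<lambda>n. birkhoff_sum S (\<lambda>x. indicator B x - c) n x))}"
  have [measurable]: "birkhoff_sum S (\<lambda>x. indicator B x - c) n \<in> borel_measurable M" for n
    by (rule birkhoff_sum_measurable) measurable
  have L [measurable]: "L \<in> sets M"
    unfolding L_def bdd_above_range_iff_nat by measurable
  have "S x \<in> L \<longleftrightarrow> x \<in> L" if "x \<in> space M" for x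
    using that measurable_space[OF S_meas that] bdd_above_birkhoff_sum_iff[of S _ x]
    by (simp add: L_def)
  then have "S -` L \<inter> space M = L"
    using sets.sets_into_space[OF L] by blast
  then have L_01: "emeasure M L = 0 \<or> emeasure M L = 1"
    using erg L unfolding ergodic_map_def by blast
  have "space M - L = {x \<in> space M. \<not> bdd_above (range (\<lambda>n. birkhoff_sum S (\<lambda>x. indicator B x - c) n x))}"
    unfolding L_def by blast
  moreover have "measure M B / c < 1" using c c_pos by simp
  ultimately have "measure M (space M - L) < 1"
    using measure_birkhoff_sum_unbounded_le[OF _ S B c_pos] by simp
  with L_01 have "prob L = 1" using prob_compl[OF L] by (auto simp: emeasure_eq_measure)
  then have "AE x in M. x \<in> L" by (rule AE_prob_1)
  then show ?thesis
    by (rule eventually_mono) (auto simp: L_def intro: eventually_visit_count_le[OF _ c(2)])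
qed

lemma ergodic_visits_lower_density:
  assumes "prob_space M" and S: "measure_preserving_map M S" and erg: "ergodic_map M S"
    and B [measurable]: "B \<in> sets M" and r: "r < measure M B"
  shows "AE x in M. \<forall>\<^sub>F K in sequentially. r * real K \<le> real (card {k. k < K \<and> (S ^^ k) x \<in> B})"
proof -
  interpret prob_space M by fact
  have S_meas: "S \<in> measurable M M" using S unfolding measure_preserving_map_def by simp
  have "measure M (space M - B) < 1 - r" using prob_compl[OF B] r by simp
  then have "AE x in M. \<forall>\<^sub>F K in sequentially.
      real (card {k. k < K \<and> (S ^^ k) x \<in> space M - B}) \<le> (1 - r) * real K"
    by (rule ergodic_visits_upper_density[OF assms(1) S erg sets.compl_sets[OF B]])
  then show ?thesis
  proof (rule AE_mp[OF _ AE_I2], intro impI)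
    fix x assume x: "x \<in> space M"
      and ev: "\<forall>\<^sub>F K in sequentially. real (card {k. k < K \<and> (S ^^ k) x \<in> space M - B}) \<le> (1 - r) * real K"
    have compl_count: "real (card {k. k < K \<and> (S ^^ k) x \<in> space M - B})
        = real K - real (card {k. k < K \<and> (S ^^ k) x \<in> B})" for K
    proof -
      have "indicator (space M - B) ((S ^^ k) x) = 1 - (indicator B ((S ^^ k) x) :: real)" for k
        using measurable_space[OF measurable_compose_n[OF S_meas] x] by (simp add: indicator_def)
      then have "birkhoff_sum S (indicator (space M - B)) K x = real K - birkhoff_sum S (indicator B) K x"
        by (simp add: birkhoff_sum_def sum_subtractf)
      then show ?thesis by (simp only: birkhoff_sum_indicator)
    qed
    from ev show "\<forall>\<^sub>F K in sequentially. r * real K \<le> real (card {k. k < K \<and> (S ^^ k) x \<in> B})"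
    proof eventually_elim
      case (elim K)
      then show ?case using compl_count[of K] by (simp add: algebra_simps)
    qed
  qed
qed

lemma ergodic_visits_frequently:
  assumes "prob_space M" and S: "measure_preserving_map M S" and erg: "ergodic_map M S"
    and B: "B \<in> sets M" and pos: "0 < measure M B"
  shows "AE x in M. \<exists>\<^sub>F i in sequentially. (S ^^ i) x \<in> B"
proof -
  have "AE x in M. \<forall>\<^sub>F K in sequentially.
      measure M B / 2 * real K \<le> real (card {k. k < K \<and> (S ^^ k) x \<in> B})"
    using pos by (intro ergodic_visits_lower_density[OF assms(1-4)]) simp
  then show ?thesis
  proof (rule eventually_mono)
    fix x
    assume ev: "\<forall>\<^sub>F K in sequentially. measure M B / 2 * real K \<le> real (card {k. k < K \<and> (S ^^ k) x \<in> B})"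
    show "\<exists>\<^sub>F i in sequentially. (S ^^ i) x \<in> B"
    proof (rule ccontr)
      assume "\<not> (\<exists>\<^sub>F i in sequentially. (S ^^ i) x \<in> B)"
      then obtain m where m: "\<And>i. m \<le> i \<Longrightarrow> (S ^^ i) x \<notin> B"
        by (auto simp: not_frequently eventually_sequentially)
      have "{k. k < K \<and> (S ^^ k) x \<in> B} \<subseteq> {..<m}" for K
        using m not_le by blast
      then have card_le: "real (card {k. k < K \<and> (S ^^ k) x \<in> B}) \<le> m" for K
        using card_mono[OF finite_lessThan] by fastforce
      from ev have "\<forall>\<^sub>F K in sequentially. measure M B / 2 * real K \<le> real m"
      proof eventually_elim
        case (elim K)
        then show ?case using card_le[of K] by linarith
      qed
      moreover have "\<forall>\<^sub>F K in sequentially. real m < measure M B / 2 * real K"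
      proof -
        obtain K0 :: nat where K0: "2 * real m / measure M B < K0"
          using reals_Archimedean2 by blast
        have "real m < measure M B / 2 * real K" if "K0 \<le> K" for K
        proof -
          have "2 * real m / measure M B < real K" using K0 that by linarith
          then show ?thesis using pos by (simp add: pos_divide_less_eq mult.commute)
        qed
        then show ?thesis unfolding eventually_sequentially by blast
      qed
      ultimately have "\<forall>\<^sub>F K in sequentially. False"
        by eventually_elim simp
      then show False by simp
    qed
  qed
qed

lemma real_distribution_quantile:
  assumes "real_distribution D" and d: "0 < d" "d < 1"
  shows "\<exists>s. measure D {..<s} \<le> d \<and> d \<le> cdf D s"
proof -
  interpret real_distribution D by fact
  define S where "S = {t. d \<le> cdf D t}"
  have "\<forall>\<^sub>F t in at_top. d < cdf D t"
    using order_tendstoD(1)[OF cdf_lim_at_top_prob d(2)] .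
  then obtain t0 where "\<And>t. t0 \<le> t \<Longrightarrow> d < cdf D t"
    unfolding eventually_at_top_linorder by blast
  then have "t0 \<in> S" unfolding S_def by (simp add: less_imp_le)
  then have S_ne: "S \<noteq> {}" by blast
  have "\<forall>\<^sub>F t in at_bot. cdf D t < d"
    using order_tendstoD(2)[OF cdf_lim_at_bot d(1)] .
  then obtain b where b: "\<And>t. t \<le> b \<Longrightarrow> cdf D t < d" unfolding eventually_at_bot_linorder by blast
  have "b \<le> t" if "t \<in> S" for t
  proof (rule ccontr)
    assume "\<not> b \<le> t"
    then have "cdf D t < d" using b by simp
    with that show False unfolding S_def by simp
  qed
  then have S_bdd: "bdd_below S" by (intro bdd_belowI)
  define s where "s = Inf S"
  have above: "d \<le> cdf D t" if "s < t" for t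
  proof -
    from that have "\<exists>t'\<in>S. t' < t" unfolding s_def by (simp add: cInf_less_iff[OF S_ne S_bdd])
    then obtain t' where "t' \<in> S" "t' < t" ..
    then show ?thesis using cdf_nondecreasing[of t' t] unfolding S_def by simp
  qed
  have "\<forall>\<^sub>F t in at_right s. d \<le> cdf D t"
    using eventually_at_right_less[of s] by (rule eventually_mono) (rule above)
  moreover have "(cdf D \<longlongrightarrow> cdf D s) (at_right s)"
    using cdf_is_right_cont[of s] by (simp add: continuous_within)
  ultimately have "d \<le> cdf D s"
    using trivial_limit_at_right_real[of s] by (blast intro: tendsto_lowerbound)
  have below: "cdf D t \<le> d" if "t < s" for t
  proof (rule ccontr)
    assume "\<not> cdf D t \<le> d"
    then have "s \<le> t" using cInf_lower[OF _ S_bdd, of t] unfolding s_def S_def by simp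
    with that show False by simp
  qed
  have "\<forall>\<^sub>F t in at_left s. t \<in> {s - 1<..<s}" by (rule eventually_at_left_real) simp
  then have "\<forall>\<^sub>F t in at_left s. cdf D t \<le> d" by (rule eventually_mono) (simp add: below)
  then have "measure D {..<s} \<le> d"
    using cdf_at_left[of s] trivial_limit_at_left_real[of s] by (blast intro: tendsto_upperbound)
  with \<open>d \<le> cdf D s\<close> show ?thesis by blast
qed

subsection \<open>Counting along one orbit\<close>

lemma card_orbit_window_le:
  "card {j \<in> {- int R..int R}. ipow M T j x \<in> U}
     \<le> card {k. k < Suc R \<and> (T ^^ k) x \<in> U} + card {k. k < Suc R \<and> (inv_into (space M) T ^^ k) x \<in> U}"
  (is "card ?W \<le> card ?F + card ?B")
proof -
  have "?W \<subseteq> int ` ?F \<union> (\<lambda>k. - int k) ` ?B"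
  proof
    fix j assume j: "j \<in> ?W"
    show "j \<in> int ` ?F \<union> (\<lambda>k. - int k) ` ?B"
    proof (cases "0 \<le> j")
      case True
      then have "nat j \<in> ?F" "j = int (nat j)" using j by (auto simp: ipow_def)
      then show ?thesis by blast
    next
      case False
      then have "nat (- j) \<in> ?B" "j = - int (nat (- j))" using j by (auto simp: ipow_def)
      then show ?thesis by blast
    qed
  qed
  then have "card ?W \<le> card (int ` ?F \<union> (\<lambda>k. - int k) ` ?B)"
    by (intro card_mono) auto
  also have "\<dots> \<le> card (int ` ?F) + card ((\<lambda>k. - int k) ` ?B)"
    by (rule card_Un_le)
  also have "\<dots> \<le> card ?F + card ?B"
    by (intro add_mono card_image_le) auto
  finally show ?thesis .
qed

text \<open>A visit \<open>T^k x \<in> A\<close> is paired with \<open>n = i - k - q > N\<close>, so that \<open>T^(n+q) (T^k x) = T^i x\<close>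
  and \<open>T^(-n) (T^k x) = T^(2k+q-i) x\<close>.\<close>
lemma card_visits_le_orbit_window:
  fixes f :: "'a \<Rightarrow> 'b::order"
  assumes T: "invertible_mpt M T" and x: "x \<in> space M"
    and A: "\<And>y n. y \<in> A \<Longrightarrow> N < n \<Longrightarrow> f (ipow M T (- int n) y) < f (ipow M T (int n + q) y)"
    and s: "f ((T ^^ i) x) \<le> s"
  shows "card {k. k < i - N - nat \<bar>q\<bar> \<and> (T ^^ k) x \<in> A}
    \<le> card {j \<in> {- int (i + nat \<bar>q\<bar>)..int (i + nat \<bar>q\<bar>)}. ipow M T j x \<in> {y \<in> space M. f y < s}}"
proof (rule card_inj_on_le)
  define \<phi> where "\<phi> k = 2 * int k + q - int i" for k
  show "inj_on \<phi> {k. k < i - N - nat \<bar>q\<bar> \<and> (T ^^ k) x \<in> A}"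
    by (auto simp: inj_on_def \<phi>_def)
  show "\<phi> ` {k. k < i - N - nat \<bar>q\<bar> \<and> (T ^^ k) x \<in> A}
      \<subseteq> {j \<in> {- int (i + nat \<bar>q\<bar>)..int (i + nat \<bar>q\<bar>)}. ipow M T j x \<in> {y \<in> space M. f y < s}}"
  proof (rule image_subsetI)
    fix k assume "k \<in> {k. k < i - N - nat \<bar>q\<bar> \<and> (T ^^ k) x \<in> A}"
    then have k: "k < i - N - nat \<bar>q\<bar>" and visit: "(T ^^ k) x \<in> A" by auto
    define n where "n = nat (int i - int k - q)"
    have n: "int n = int i - int k - q" "N < n" using k by (auto simp: n_def)
    have "- int n + int k = \<phi> k" using n(1) by (simp add: \<phi>_def)
    then have "ipow M T (- int n) ((T ^^ k) x) = ipow M T (\<phi> k) x"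
      using ipow_add[OF T x, of "- int n" "int k"] by (simp add: ipow_of_nat)
    moreover have "ipow M T (int n + q) ((T ^^ k) x) = (T ^^ i) x"
      using ipow_add[OF T x, of "int n + q" "int k"] n(1) by (simp add: ipow_of_nat)
    ultimately have "f (ipow M T (\<phi> k) x) < s"
      using A[OF visit n(2)] s by (simp add: order_less_le_trans)
    moreover have "- int (i + nat \<bar>q\<bar>) \<le> \<phi> k" "\<phi> k \<le> int (i + nat \<bar>q\<bar>)"
      using k by (auto simp: \<phi>_def)
    ultimately show "\<phi> k \<in> {j \<in> {- int (i + nat \<bar>q\<bar>)..int (i + nat \<bar>q\<bar>)}.
        ipow M T j x \<in> {y \<in> space M. f y < s}}"
      using ipow_in_space[OF T x] by auto
  qed
qed (rule finite_subset[OF _ finite_atLeastAtMost_int], blast)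

lemma eventually_orbit_above_level:
  fixes f :: "'a \<Rightarrow> real"
  assumes T: "invertible_mpt M T" and x: "x \<in> space M"
    and A: "\<And>y n. y \<in> A \<Longrightarrow> N < n \<Longrightarrow> f (ipow M T (- int n) y) < f (ipow M T (int n + q) y)"
    and ab: "2 * b < a"
    and dens_A: "\<forall>\<^sub>F K in sequentially. a * real K \<le> real (card {k. k < K \<and> (T ^^ k) x \<in> A})"
    and dens_fw: "\<forall>\<^sub>F K in sequentially.
      real (card {k. k < K \<and> (T ^^ k) x \<in> {y \<in> space M. f y < s}}) \<le> b * real K"
    and dens_bw: "\<forall>\<^sub>F K in sequentially.
      real (card {k. k < K \<and> (inv_into (space M) T ^^ k) x \<in> {y \<in> space M. f y < s}}) \<le> b * real K"
  shows "\<forall>\<^sub>F i in sequentially. s < f ((T ^^ i) x)"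
proof -
  from dens_A obtain K1 where
    K1: "\<And>K. K1 \<le> K \<Longrightarrow> a * real K \<le> real (card {k. k < K \<and> (T ^^ k) x \<in> A})"
    unfolding eventually_sequentially by blast
  from dens_fw obtain K2 where
    K2: "\<And>K. K2 \<le> K \<Longrightarrow> real (card {k. k < K \<and> (T ^^ k) x \<in> {y \<in> space M. f y < s}}) \<le> b * real K"
    unfolding eventually_sequentially by blast
  from dens_bw obtain K3 where
    K3: "\<And>K. K3 \<le> K \<Longrightarrow>
      real (card {k. k < K \<and> (inv_into (space M) T ^^ k) x \<in> {y \<in> space M. f y < s}}) \<le> b * real K"
    unfolding eventually_sequentially by blast
  define Q where "Q = nat \<bar>q\<bar>"
  define C where "C = a * (real N + real Q) + 2 * b * (real Q + 1)"
  have "s < f ((T ^^ i) x)" if i: "K1 + N + Q + K2 + K3 + nat \<lceil>C / (a - 2 * b)\<rceil> + 1 \<le> i" for i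
  proof (rule ccontr)
    assume "\<not> s < f ((T ^^ i) x)"
    then have level: "f ((T ^^ i) x) \<le> s" by simp
    define K where "K = i - N - Q"
    define R where "R = i + Q"
    have "a * real K \<le> real (card {k. k < K \<and> (T ^^ k) x \<in> A})"
      using i by (intro K1) (simp add: K_def)
    also have "\<dots> \<le> real (card {j \<in> {- int R..int R}. ipow M T j x \<in> {y \<in> space M. f y < s}})"
      using card_visits_le_orbit_window[OF T x A level] by (simp add: K_def R_def Q_def)
    also have "\<dots> \<le> real (card {k. k < Suc R \<and> (T ^^ k) x \<in> {y \<in> space M. f y < s}})
        + real (card {k. k < Suc R \<and> (inv_into (space M) T ^^ k) x \<in> {y \<in> space M. f y < s}})"
      using card_orbit_window_le by (simp only: of_nat_add[symmetric] of_nat_le_iff)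
    also have "\<dots> \<le> 2 * b * real (Suc R)"
      using K2[of "Suc R"] K3[of "Suc R"] i by (simp add: R_def)
    finally have "a * (real i - real N - real Q) \<le> 2 * b * (real i + real Q + 1)"
      using i by (simp add: K_def R_def of_nat_diff algebra_simps)
    then have "(a - 2 * b) * real i \<le> C"
      by (simp add: C_def algebra_simps)
    moreover have "C / (a - 2 * b) < real i"
      using i by linarith
    ultimately show False
      using ab by (simp add: pos_divide_less_eq mult.commute)
  qed
  then show ?thesis unfolding eventually_sequentially by blast
qed

lemma null_sets_eventually_backward_less_forward:
  fixes f :: "'a \<Rightarrow> real" and q :: int and N :: nat
  assumes "prob_space M" and T: "invertible_mpt M T" and erg: "ergodic_map M T"
    and f [measurable]: "f \<in> borel_measurable M"
  shows "{x \<in> space M. \<forall>n>N. f (ipow M T (- int n) x) < f (ipow M T (int n + q) x)} \<in> null_sets M"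
    (is "?A \<in> null_sets M")
proof (rule ccontr)
  interpret prob_space M by fact
  have [measurable]: "ipow M T a \<in> measurable M M" for a by (rule ipow_measurable[OF T])
  have A [measurable]: "?A \<in> sets M" by measurable
  assume "?A \<notin> null_sets M"
  then have "prob ?A \<noteq> 0" using A by (auto simp: emeasure_eq_measure)
  then have c: "0 < prob ?A" using measure_nonneg[of M ?A] by linarith
  obtain s where U: "prob {x \<in> space M. f x < s} \<le> prob ?A / 4"
    and Z: "prob ?A / 4 \<le> prob {x \<in> space M. f x \<le> s}"
  proof -
    have "prob ?A / 4 < 1" using prob_le_1[of ?A] by linarith
    with c obtain s where "measure (distr M borel f) {..<s} \<le> prob ?A / 4"
      and "prob ?A / 4 \<le> cdf (distr M borel f) s"
      using real_distribution_quantile[of "distr M borel f" "prob ?A / 4"] by auto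
    moreover have "f -` {..<s} \<inter> space M = {x \<in> space M. f x < s}"
      and "f -` {..s} \<inter> space M = {x \<in> space M. f x \<le> s}" by auto
    ultimately show thesis using that[of s] by (simp add: cdf_def measure_distr)
  qed
  have mpt: "measure_preserving_map M T" and mpt_inv: "measure_preserving_map M (inv_into (space M) T)"
    and erg_inv: "ergodic_map M (inv_into (space M) T)"
    using T ergodic_map_inv_into[OF T erg] unfolding invertible_mpt_def by auto
  \<comment> \<open>Any densities \<open>a < prob ?A\<close> and \<open>b > prob ?A / 4\<close> with \<open>2 b < a\<close> would do.\<close>
  have "AE x in M. \<forall>\<^sub>F K in sequentially.
      7 / 8 * prob ?A * real K \<le> real (card {k. k < K \<and> (T ^^ k) x \<in> ?A})"
    using c by (intro ergodic_visits_lower_density[OF assms(1) mpt erg A]) simp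
  moreover have "AE x in M. \<forall>\<^sub>F K in sequentially.
      real (card {k. k < K \<and> (T ^^ k) x \<in> {y \<in> space M. f y < s}}) \<le> 3 / 8 * prob ?A * real K"
    using U c by (intro ergodic_visits_upper_density[OF assms(1) mpt erg]) simp_all
  moreover have "AE x in M. \<forall>\<^sub>F K in sequentially.
      real (card {k. k < K \<and> (inv_into (space M) T ^^ k) x \<in> {y \<in> space M. f y < s}})
        \<le> 3 / 8 * prob ?A * real K"
    using U c by (intro ergodic_visits_upper_density[OF assms(1) mpt_inv erg_inv]) simp_all
  moreover have "AE x in M. \<exists>\<^sub>F i in sequentially. (T ^^ i) x \<in> {y \<in> space M. f y \<le> s}"
    using Z c by (intro ergodic_visits_frequently[OF assms(1) mpt erg]) simp_all
  ultimately have "AE x in M. False"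
    using AE_space
  proof eventually_elim
    case (elim x)
    have "\<forall>\<^sub>F i in sequentially. s < f ((T ^^ i) x)"
      using c by (intro eventually_orbit_above_level[OF T elim(5) _ _ elim(1-3)]) auto
    from frequently_ex[OF frequently_eventually_frequently[OF elim(4) this]]
    show False by auto
  qed
  then show False by (simp add: AE_False)
qed

theorem theorem5:
  fixes M :: "'a measure" and T :: "'a \<Rightarrow> 'a" and f :: "'a \<Rightarrow> real" and q :: int
  assumes "prob_space M"
    and "invertible_mpt M T"
    and "ergodic_map M T"
    and "f \<in> borel_measurable M"
  shows "(\<Union>N\<in>{N::nat. N > 0}. \<Inter>n\<in>{n::nat. n > N}.
            {x \<in> space M. f (ipow M T (- int n) x) < f (ipow M T (int n + q) x)}) \<in> null_sets M"
proof -
  have "(\<Inter>n\<in>{n. n > N}. {x \<in> space M. f (ipow M T (- int n) x) < f (ipow M T (int n + q) x)})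
      = {x \<in> space M. \<forall>n>N. f (ipow M T (- int n) x) < f (ipow M T (int n + q) x)}" for N :: nat
    by (auto intro: exI[of _ "Suc N"])
  then show ?thesis
    using null_sets_eventually_backward_less_forward[OF assms] by (simp add: null_sets_UN')
qed

end
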